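(* Let $R$ be an associative unital division ring over a field of characteristic $0$, equipped with two commuting derivations $\partial_x,\partial_y$ (written $F_x=\partial_x F$, $F_y=\partial_y F$). Let $\varphi\in R$ and for $n\geq1$ put $$\Theta_n=\bigl(\partial_x^{\,i-1}\partial_y^{\,j-1}\varphi\bigr)_{1\leq i,j\leq n},\qquad \theta_n=|\Theta_n|_{nn},$$ with the convention $\theta_0^{-1}:=0$, and assume all quasideterminants involved are defined and all $\theta_n$ are invertible. Then for all $n\geq1$, $$\bigl(\theta_{n,x}\theta_n^{-1}\bigr)_y=\theta_{n+1}\theta_n^{-1}-\theta_n\theta_{n-1}^{-1}.$$
   Context: A derivation of $R$ is an $F$-linear map $\partial:R\to R$ vanishing on $F$ and satisfying $\partial(FG)=\partial(F)G+F\partial(G)$. For an $n\times n$ matrix $X$ over $R$, the quasideterminant is $|X|_{ij}=x_{ij}-r_i^j(X^{ij})^{-1}c_j^i$, where $X^{ij}$ is $X$ with row $i$ and column $j$ deleted, $r_i^j$ is row $i$ without its $j$-th entry, $c_j^i$ is column $j$ without its $i$-th entry; $|X|_{11}=x_{11}$ for $n=1$. *)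

theory Defs
  imports "Jordan_Normal_Form.Determinant"
begin

definition central_subfield :: "'a::division_ring set \<Rightarrow> bool" where
  "central_subfield K \<longleftrightarrow> 0 \<in> K \<and> 1 \<in> K \<and>
     (\<forall>a\<in>K. \<forall>b\<in>K. a + b \<in> K \<and> a - b \<in> K \<and> a * b \<in> K) \<and>
     (\<forall>a\<in>K. inverse a \<in> K) \<and>
     (\<forall>c\<in>K. \<forall>a. c * a = a * c)"

definition is_derivation :: "'a::division_ring set \<Rightarrow> ('a \<Rightarrow> 'a) \<Rightarrow> bool" where
  "is_derivation K d \<longleftrightarrow>
     (\<forall>a b. d (a + b) = d a + d b) \<and>
     (\<forall>c\<in>K. \<forall>a. d (c * a) = c * d a) \<and>
     (\<forall>c\<in>K. d c = 0) \<and>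
     (\<forall>a b. d (a * b) = d a * b + a * d b)"

text \<open>Inverse of an invertible square matrix (any two-sided inverse; it is unique).\<close>
definition mat_inv :: "'a::semiring_1 mat \<Rightarrow> 'a mat" where
  "mat_inv A = (SOME B. inverts_mat A B \<and> inverts_mat B A)"

text \<open>Quasideterminant |X|_{ij} (0-based indices), for X square of size n:
  x_ij - r_i^j (X^{ij})^{-1} c_j^i.  For n = 1 the correction term is the empty sum 0.\<close>
definition quasidet :: "'a::division_ring mat \<Rightarrow> nat \<Rightarrow> nat \<Rightarrow> 'a" where
  "quasidet X i j =
     (let n = dim_row X;
          r = vec (n - 1) (\<lambda>a. X $$ (i, insert_index j a));
          c = vec (n - 1) (\<lambda>b. X $$ (insert_index i b, j))
      in X $$ (i, j) - r \<bullet> (mat_inv (mat_delete X i j) *\<^sub>v c))"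

definition quasidet_defined :: "'a::division_ring mat \<Rightarrow> nat \<Rightarrow> nat \<Rightarrow> bool" where
  "quasidet_defined X i j \<longleftrightarrow> invertible_mat (mat_delete X i j)"

text \<open>Theta_n = (dx^(i-1) dy^(j-1) phi)_{1<=i,j<=n}, here with 0-based indices.\<close>
definition Theta :: "('a \<Rightarrow> 'a) \<Rightarrow> ('a \<Rightarrow> 'a) \<Rightarrow> 'a \<Rightarrow> nat \<Rightarrow> 'a mat" where
  "Theta dx dy \<phi> n = mat n n (\<lambda>(i, j). (dx ^^ i) ((dy ^^ j) \<phi>))"

definition theta :: "('a \<Rightarrow> 'a) \<Rightarrow> ('a \<Rightarrow> 'a) \<Rightarrow> 'a::division_ring \<Rightarrow> nat \<Rightarrow> 'a" where
  "theta dx dy \<phi> n = quasidet (Theta dx dy \<phi> n) (n - 1) (n - 1)"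

definition theta_inv :: "('a \<Rightarrow> 'a) \<Rightarrow> ('a \<Rightarrow> 'a) \<Rightarrow> 'a::division_ring \<Rightarrow> nat \<Rightarrow> 'a" where
  "theta_inv dx dy \<phi> n = (if n = 0 then 0 else inverse (theta dx dy \<phi> n))"

end

theory Submission
  imports Defs
begin

(* Let B_n be the inverse of Theta_n. By the Schur complement formula its last diagonal entry is
   theta_n^{-1}, and deleting the last row and column of Theta_{n+1} changes the inverse by a rank
   one correction. Since dx shifts the rows and dy the columns of Theta_n, the formula
   dB = - B (dTheta) B expresses the derivatives of the entries of B_n through B_n itself plus one
   extra row or column. This gives
     theta_{n,x} theta_n^{-1} = theta_n (B_n)_{n,n-1} + sum_l (dx^n dy^(l-1) phi) (B_n)_{l,n},
   and differentiating in y, the sum telescopes to theta_{n+1} theta_n^{-1} while the first term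
   yields - theta_n theta_{n-1}^{-1}. *)

section \<open>Inverses of square matrices\<close>

lemma
  fixes A :: "'a::semiring_1 mat"
  assumes "A \<in> carrier_mat n n" and "invertible_mat A"
  shows mat_inv_carrier: "mat_inv A \<in> carrier_mat n n"
    and mat_mult_mat_inv: "A * mat_inv A = 1\<^sub>m n"
    and mat_inv_mult_mat: "mat_inv A * A = 1\<^sub>m n"
proof -
  obtain B where "inverts_mat A B \<and> inverts_mat B A"
    using assms(2) unfolding invertible_mat_def by blast
  then have "inverts_mat A (mat_inv A) \<and> inverts_mat (mat_inv A) A"
    unfolding mat_inv_def by (rule someI)
  then have right: "A * mat_inv A = 1\<^sub>m n" and left: "mat_inv A * A = 1\<^sub>m (dim_row (mat_inv A))"
    using assms(1) unfolding inverts_mat_def by auto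
  have "dim_col (mat_inv A) = n" using arg_cong[OF right, of dim_col] by simp
  moreover have "dim_row (mat_inv A) = n" using arg_cong[OF left, of dim_col] assms(1) by simp
  ultimately show "mat_inv A \<in> carrier_mat n n" by auto
  with right left show "A * mat_inv A = 1\<^sub>m n" "mat_inv A * A = 1\<^sub>m n" by auto
qed

lemma
  fixes A :: "'a::semiring_1 mat"
  assumes A: "A \<in> carrier_mat n n" "invertible_mat A" and "i < n" "j < n"
  shows mat_inv_sum_right: "(\<Sum>k<n. A $$ (i, k) * mat_inv A $$ (k, j)) = (if i = j then 1 else 0)"
    and mat_inv_sum_left: "(\<Sum>k<n. mat_inv A $$ (i, k) * A $$ (k, j)) = (if i = j then 1 else 0)"
proof -
  have "(A * mat_inv A) $$ (i, j) = (if i = j then 1 else 0)"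
    "(mat_inv A * A) $$ (i, j) = (if i = j then 1 else 0)"
    using mat_mult_mat_inv[OF A] mat_inv_mult_mat[OF A] assms by simp_all
  with mat_inv_carrier[OF A] assms
  show "(\<Sum>k<n. A $$ (i, k) * mat_inv A $$ (k, j)) = (if i = j then 1 else 0)"
    "(\<Sum>k<n. mat_inv A $$ (i, k) * A $$ (k, j)) = (if i = j then 1 else 0)"
    by (simp_all add: scalar_prod_def lessThan_atLeast0)
qed

lemma mat_inv_solve_left:
  fixes A :: "'a::semiring_1 mat"
  assumes A: "A \<in> carrier_mat n n" "invertible_mat A"
    and eq: "\<And>i. i < n \<Longrightarrow> (\<Sum>k<n. A $$ (i, k) * y k) = z i" and "p < n"
  shows "y p = (\<Sum>i<n. mat_inv A $$ (p, i) * z i)"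
proof -
  have "y p = (\<Sum>k<n. (if p = k then 1 else 0) * y k)"
    using \<open>p < n\<close> by (simp add: if_distrib if_distribR cong: if_cong)
  also have "\<dots> = (\<Sum>k<n. (\<Sum>i<n. mat_inv A $$ (p, i) * A $$ (i, k)) * y k)"
    using \<open>p < n\<close> by (simp add: mat_inv_sum_left[OF A])
  also have "\<dots> = (\<Sum>i<n. mat_inv A $$ (p, i) * (\<Sum>k<n. A $$ (i, k) * y k))"
    by (simp add: sum_distrib_left sum_distrib_right mult.assoc) (rule sum.swap)
  also have "\<dots> = (\<Sum>i<n. mat_inv A $$ (p, i) * z i)"
    by (simp add: eq)
  finally show ?thesis .
qed

lemma mat_inv_solve_right:
  fixes A :: "'a::semiring_1 mat"
  assumes A: "A \<in> carrier_mat n n" "invertible_mat A"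
    and eq: "\<And>j. j < n \<Longrightarrow> (\<Sum>k<n. y k * A $$ (k, j)) = z j" and "q < n"
  shows "y q = (\<Sum>j<n. z j * mat_inv A $$ (j, q))"
proof -
  have "y q = (\<Sum>k<n. y k * (if k = q then 1 else 0))"
    using \<open>q < n\<close> by (simp add: if_distrib cong: if_cong)
  also have "\<dots> = (\<Sum>k<n. y k * (\<Sum>j<n. A $$ (k, j) * mat_inv A $$ (j, q)))"
    using \<open>q < n\<close> by (simp add: mat_inv_sum_right[OF A])
  also have "\<dots> = (\<Sum>j<n. (\<Sum>k<n. y k * A $$ (k, j)) * mat_inv A $$ (j, q))"
    by (simp add: sum_distrib_left sum_distrib_right mult.assoc) (rule sum.swap)
  also have "\<dots> = (\<Sum>j<n. z j * mat_inv A $$ (j, q))"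
    by (simp add: eq)
  finally show ?thesis .
qed

lemma sum_shift_delta:
  fixes f :: "nat \<Rightarrow> 'a::semiring_1"
  assumes "q \<le> n"
  shows "(\<Sum>i<n. f i * (if Suc i = q then 1 else 0)) = (if q = 0 then 0 else f (q - 1))"
    and "(\<Sum>i<n. (if Suc i = q then 1 else 0) * f i) = (if q = 0 then 0 else f (q - 1))"
  using assms by (cases q; simp add: if_distrib if_distribR cong: if_cong)+

section \<open>Bordered matrices\<close>

lemma mat_delete_last_index:
  assumes "A \<in> carrier_mat (Suc n) (Suc n)" "i < n" "j < n"
  shows "mat_delete A n n $$ (i, j) = A $$ (i, j)"
  using assms unfolding mat_delete_def by simp

lemma quasidet_last:
  fixes A :: "'a::division_ring mat"
  assumes A: "A \<in> carrier_mat (Suc n) (Suc n)" and "invertible_mat (mat_delete A n n)"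
  shows "quasidet A n n = A $$ (n, n)
           - (\<Sum>a<n. A $$ (n, a) * (\<Sum>b<n. mat_inv (mat_delete A n n) $$ (a, b) * A $$ (b, n)))"
proof -
  have "mat_delete A n n \<in> carrier_mat n n"
    using mat_delete_carrier[OF A] by simp
  then have "mat_inv (mat_delete A n n) \<in> carrier_mat n n"
    using assms(2) by (rule mat_inv_carrier)
  with A show ?thesis
    unfolding quasidet_def Let_def
    by (simp add: scalar_prod_def lessThan_atLeast0)
qed

context
  fixes A :: "'a::division_ring mat" and n :: nat
  assumes A: "A \<in> carrier_mat (Suc n) (Suc n)" "invertible_mat A"
    and A\<^sub>0: "invertible_mat (mat_delete A n n)"
begin

private lemma A\<^sub>0_carrier: "mat_delete A n n \<in> carrier_mat n n"
  using mat_delete_carrier[OF A(1)] by simp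

private lemma mat_inv_A\<^sub>0_solve_left:
  assumes "\<And>i. i < n \<Longrightarrow> (\<Sum>k<n. A $$ (i, k) * y k) = z i" and "p < n"
  shows "y p = (\<Sum>i<n. mat_inv (mat_delete A n n) $$ (p, i) * z i)"
  using mat_inv_solve_left[OF A\<^sub>0_carrier A\<^sub>0] assms by (simp add: mat_delete_last_index[OF A(1)])

private lemma mat_inv_A\<^sub>0_solve_right:
  assumes "\<And>j. j < n \<Longrightarrow> (\<Sum>k<n. y k * A $$ (k, j)) = z j" and "q < n"
  shows "y q = (\<Sum>j<n. z j * mat_inv (mat_delete A n n) $$ (j, q))"
  using mat_inv_solve_right[OF A\<^sub>0_carrier A\<^sub>0] assms by (simp add: mat_delete_last_index[OF A(1)])

lemma quasidet_mult_mat_inv_last: "quasidet A n n * mat_inv A $$ (n, n) = 1"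
proof -
  define \<beta> where "\<beta> = mat_inv A $$ (n, n)"
  define G where "G k = (\<Sum>i<n. mat_inv (mat_delete A n n) $$ (k, i) * A $$ (i, n))" for k
  have last_col: "mat_inv A $$ (k, n) = - (G k * \<beta>)" if "k < n" for k
  proof -
    have "(\<Sum>k<n. A $$ (i, k) * mat_inv A $$ (k, n)) = - (A $$ (i, n) * \<beta>)" if "i < n" for i
      using mat_inv_sum_right[OF A, of i n] that
      by (simp add: \<beta>_def eq_neg_iff_add_eq_0)
    then have "mat_inv A $$ (k, n) = (\<Sum>i<n. mat_inv (mat_delete A n n) $$ (k, i) * - (A $$ (i, n) * \<beta>))"
      using \<open>k < n\<close> by (rule mat_inv_A\<^sub>0_solve_left)
    then show ?thesis
      by (simp add: G_def sum_negf sum_distrib_right mult.assoc)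
  qed
  have "1 = (\<Sum>k<Suc n. A $$ (n, k) * mat_inv A $$ (k, n))"
    using mat_inv_sum_right[OF A, of n n] by simp
  also have "\<dots> = - (\<Sum>k<n. A $$ (n, k) * G k * \<beta>) + A $$ (n, n) * \<beta>"
    by (simp add: \<beta>_def last_col sum_negf mult.assoc)
  also have "\<dots> = (A $$ (n, n) - (\<Sum>k<n. A $$ (n, k) * G k)) * \<beta>"
    by (simp add: algebra_simps sum_distrib_right)
  also have "\<dots> = quasidet A n n * mat_inv A $$ (n, n)"
    by (simp add: quasidet_last[OF A(1) A\<^sub>0] G_def \<beta>_def)
  finally show ?thesis ..
qed

lemma mat_inv_mat_delete_last:
  assumes "i < n" "q < n"
  shows "mat_inv (mat_delete A n n) $$ (i, q) = mat_inv A $$ (i, q)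
           - mat_inv A $$ (i, n) * inverse (mat_inv A $$ (n, n)) * mat_inv A $$ (n, q)"
proof -
  define \<beta> where "\<beta> = mat_inv A $$ (n, n)"
  have "\<beta> \<noteq> 0"
    using quasidet_mult_mat_inv_last by (auto simp: \<beta>_def)
  define Y where "Y k = mat_inv A $$ (i, k) - mat_inv A $$ (i, n) * inverse \<beta> * mat_inv A $$ (n, k)" for k
  have "(\<Sum>k<n. Y k * A $$ (k, j)) = (if i = j then 1 else 0)" if "j < n" for j
  proof -
    have row_i: "(\<Sum>k<n. mat_inv A $$ (i, k) * A $$ (k, j)) + mat_inv A $$ (i, n) * A $$ (n, j)
                  = (if i = j then 1 else 0)"
      using mat_inv_sum_left[OF A, of i j] \<open>i < n\<close> that by simp
    have row_n: "(\<Sum>k<n. mat_inv A $$ (n, k) * A $$ (k, j)) = - (\<beta> * A $$ (n, j))"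
      using mat_inv_sum_left[OF A, of n j] that by (simp add: \<beta>_def eq_neg_iff_add_eq_0)
    have "(\<Sum>k<n. Y k * A $$ (k, j)) = (\<Sum>k<n. mat_inv A $$ (i, k) * A $$ (k, j))
        - mat_inv A $$ (i, n) * inverse \<beta> * (\<Sum>k<n. mat_inv A $$ (n, k) * A $$ (k, j))"
      by (simp add: Y_def algebra_simps sum_subtractf sum_distrib_left)
    also have "\<dots> = (\<Sum>k<n. mat_inv A $$ (i, k) * A $$ (k, j)) + mat_inv A $$ (i, n) * A $$ (n, j)"
      using \<open>\<beta> \<noteq> 0\<close> by (simp add: row_n mult.assoc flip: mult.assoc[of "inverse \<beta>"])
    finally show ?thesis using row_i by simp
  qed
  then have "Y q = (\<Sum>j<n. (if i = j then 1 else 0) * mat_inv (mat_delete A n n) $$ (j, q))"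
    using \<open>q < n\<close> by (rule mat_inv_A\<^sub>0_solve_right)
  then show ?thesis
    using \<open>i < n\<close> by (simp add: Y_def \<beta>_def if_distrib if_distribR cong: if_cong)
qed

end

section \<open>Derivations\<close>

locale derivation =
  fixes d :: "'a::division_ring \<Rightarrow> 'a"
  assumes add: "d (a + b) = d a + d b"
    and mult: "d (a * b) = d a * b + a * d b"
begin

lemma zero [simp]: "d 0 = 0"
  using add[of 0 0] by simp

lemma one [simp]: "d 1 = 0"
  using mult[of 1 1] by simp

lemma sum: "d (sum f S) = (\<Sum>x\<in>S. d (f x))"
  by (induction S rule: infinite_finite_induct) (simp_all add: add)

lemma inverse:
  assumes "a \<noteq> 0"
  shows "d (inverse a) = - (inverse a * d a * inverse a)"
proof -
  have "d a * inverse a + a * d (inverse a) = 0"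
    using mult[of a "inverse a"] assms by simp
  then have "a * d (inverse a) = - (d a * inverse a)"
    by (simp add: eq_neg_iff_add_eq_0 add.commute)
  then have "inverse a * (a * d (inverse a)) = inverse a * - (d a * inverse a)"
    by simp
  with assms show ?thesis
    by (simp add: mult.assoc[symmetric])
qed

lemma mat_inv_entry:
  assumes A: "A \<in> carrier_mat n n" "invertible_mat A" and "p < n" "q < n"
  shows "d (mat_inv A $$ (p, q))
           = - (\<Sum>i<n. mat_inv A $$ (p, i) * (\<Sum>k<n. d (A $$ (i, k)) * mat_inv A $$ (k, q)))"
proof -
  have "(\<Sum>k<n. A $$ (i, k) * d (mat_inv A $$ (k, q)))
          = - (\<Sum>k<n. d (A $$ (i, k)) * mat_inv A $$ (k, q))" if "i < n" for i
  proof -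
    have "0 = d (\<Sum>k<n. A $$ (i, k) * mat_inv A $$ (k, q))"
      using mat_inv_sum_right[OF A that \<open>q < n\<close>] by simp
    also have "\<dots> = (\<Sum>k<n. d (A $$ (i, k)) * mat_inv A $$ (k, q))
                   + (\<Sum>k<n. A $$ (i, k) * d (mat_inv A $$ (k, q)))"
      by (simp add: sum mult sum.distrib)
    finally show ?thesis
      by (simp add: eq_neg_iff_add_eq_0 add.commute)
  qed
  then have "d (mat_inv A $$ (p, q))
      = (\<Sum>i<n. mat_inv A $$ (p, i) * - (\<Sum>k<n. d (A $$ (i, k)) * mat_inv A $$ (k, q)))"
    by (rule mat_inv_solve_left[OF A _ \<open>p < n\<close>])
  then show ?thesis
    by (simp add: sum_negf)
qed

end

section \<open>The matrices Theta\<close>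

lemma Theta_carrier: "Theta dx dy \<phi> m \<in> carrier_mat m m"
  unfolding Theta_def by simp

lemma mat_delete_Theta: "mat_delete (Theta dx dy \<phi> (Suc m)) m m = Theta dx dy \<phi> m"
  unfolding mat_delete_def Theta_def by (rule eq_matI) auto

locale Theta_matrices =
  dx: derivation dx + dy: derivation dy for dx dy :: "'a::division_ring \<Rightarrow> 'a" +
  fixes \<phi> :: 'a
  assumes commute: "\<And>a. dx (dy a) = dy (dx a)"
    and invertible_Theta: "\<And>m. invertible_mat (Theta dx dy \<phi> m)"
begin

abbreviation u :: "nat \<Rightarrow> nat \<Rightarrow> 'a" where
  "u i j \<equiv> (dx ^^ i) ((dy ^^ j) \<phi>)"

abbreviation B :: "nat \<Rightarrow> nat \<Rightarrow> nat \<Rightarrow> 'a" where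
  "B m p q \<equiv> mat_inv (Theta dx dy \<phi> m) $$ (p, q)"

abbreviation \<theta> :: "nat \<Rightarrow> 'a" where
  "\<theta> m \<equiv> theta dx dy \<phi> m"

lemma Theta_index: "i < m \<Longrightarrow> j < m \<Longrightarrow> Theta dx dy \<phi> m $$ (i, j) = u i j"
  unfolding Theta_def by simp

lemma dy_funpow_dx [simp]: "dy ((dx ^^ i) a) = (dx ^^ i) (dy a)"
  by (induction i) (simp_all add: commute[symmetric])

lemma B_sum_right: "i < m \<Longrightarrow> j < m \<Longrightarrow> (\<Sum>k<m. u i k * B m k j) = (if i = j then 1 else 0)"
  using mat_inv_sum_right[OF Theta_carrier invertible_Theta] by (simp add: Theta_index)

lemma B_sum_left: "i < m \<Longrightarrow> j < m \<Longrightarrow> (\<Sum>k<m. B m i k * u k j) = (if i = j then 1 else 0)"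
  using mat_inv_sum_left[OF Theta_carrier invertible_Theta] by (simp add: Theta_index)

lemma dx_B:
  assumes "p < n" "q < n"
  shows "dx (B n p q) = - ((if q = 0 then 0 else B n p (q - 1))
                           + B n p (n - 1) * (\<Sum>l<n. u n l * B n l q))"
proof -
  obtain n' where n: "n = Suc n'" using assms by (cases n) auto
  have row: "(\<Sum>k<n. u (Suc i) k * B n k q)
      = (if Suc i < n then (if Suc i = q then 1 else 0) else (\<Sum>l<n. u n l * B n l q))"
    if "i < n" for i
    using that B_sum_right[OF _ \<open>q < n\<close>, of "Suc i"] by (auto simp: n less_Suc_eq)
  have "dx (B n p q) = - (\<Sum>i<n. B n p i * (\<Sum>k<n. u (Suc i) k * B n k q))"
    using dx.mat_inv_entry[OF Theta_carrier invertible_Theta assms] by (simp add: Theta_index)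
  also have "\<dots> = - (\<Sum>i<n. B n p i * (if Suc i < n then (if Suc i = q then 1 else 0)
                                           else (\<Sum>l<n. u n l * B n l q)))"
    by (simp add: row del: funpow.simps)
  also have "\<dots> = - ((\<Sum>i<n'. B n p i * (if Suc i = q then 1 else 0))
                     + B n p n' * (\<Sum>l<n. u n l * B n l q))"
    by (simp add: n del: funpow.simps)
  finally show ?thesis
    using assms by (simp add: sum_shift_delta n)
qed

lemma dy_B:
  assumes "p < n" "q < n"
  shows "dy (B n p q) = - ((if p = 0 then 0 else B n (p - 1) q)
                           + (\<Sum>k<n. B n p k * u k n) * B n (n - 1) q)"
proof -
  obtain n' where n: "n = Suc n'" using assms by (cases n) auto
  have col: "(\<Sum>k<n. B n p k * u k (Suc j))
      = (if Suc j < n then (if Suc j = p then 1 else 0) else (\<Sum>k<n. B n p k * u k n))"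
    if "j < n" for j
    using that B_sum_left[OF \<open>p < n\<close>, of "Suc j"] by (auto simp: n less_Suc_eq)
  have "dy (B n p q) = - (\<Sum>i<n. B n p i * (\<Sum>j<n. u i (Suc j) * B n j q))"
    using dy.mat_inv_entry[OF Theta_carrier invertible_Theta assms] by (simp add: Theta_index)
  also have "\<dots> = - (\<Sum>j<n. (\<Sum>k<n. B n p k * u k (Suc j)) * B n j q)"
    by (simp add: sum_distrib_left sum_distrib_right mult.assoc del: funpow.simps) (rule sum.swap)
  also have "\<dots> = - (\<Sum>j<n. (if Suc j < n then (if Suc j = p then 1 else 0)
                                   else (\<Sum>k<n. B n p k * u k n)) * B n j q)"
    by (simp add: col del: funpow.simps)
  also have "\<dots> = - ((\<Sum>j<n'. (if Suc j = p then 1 else 0) * B n j q)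
                     + (\<Sum>k<n. B n p k * u k n) * B n n' q)"
    by (simp add: n del: funpow.simps)
  finally show ?thesis
    using assms by (simp add: sum_shift_delta n)
qed

lemma theta_Suc_eq: "\<theta> (Suc m) = u m m - (\<Sum>a<m. u m a * (\<Sum>b<m. B m a b * u b m))"
  using quasidet_last[OF Theta_carrier, of dx dy \<phi> m] invertible_Theta
  by (simp add: theta_def mat_delete_Theta Theta_index)

lemma theta_mult_B_last: "\<theta> (Suc m) * B (Suc m) m m = 1"
  using quasidet_mult_mat_inv_last[OF Theta_carrier invertible_Theta, of m] invertible_Theta
  by (simp add: theta_def mat_delete_Theta)

lemma inverse_theta: "inverse (\<theta> (Suc m)) = B (Suc m) m m"
  using theta_mult_B_last by (rule inverse_unique)

lemma B_last_nonzero: "B (Suc m) m m \<noteq> 0"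
  using theta_mult_B_last[of m] by auto

lemma B_mat_delete:
  assumes "i \<le> m" "q \<le> m"
  shows "B (Suc m) i q = B (Suc (Suc m)) i q
           - B (Suc (Suc m)) i (Suc m) * \<theta> (Suc (Suc m)) * B (Suc (Suc m)) (Suc m) q"
  using mat_inv_mat_delete_last[OF Theta_carrier invertible_Theta, of "Suc m"] invertible_Theta assms
  by (simp add: mat_delete_Theta flip: inverse_theta)

lemma log_dx_theta:
  "dx (\<theta> (Suc m)) * inverse (\<theta> (Suc m))
     = \<theta> (Suc m) * (if m = 0 then 0 else B (Suc m) m (m - 1))
       + (\<Sum>l<Suc m. u (Suc m) l * B (Suc m) l m)"
proof -
  define \<beta> where "\<beta> = B (Suc m) m m"
  define X where "X = (if m = 0 then 0 else B (Suc m) m (m - 1))"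
  define R where "R = (\<Sum>l<Suc m. u (Suc m) l * B (Suc m) l m)"
  have "\<beta> \<noteq> 0" unfolding \<beta>_def by (rule B_last_nonzero)
  have \<theta>: "\<theta> (Suc m) = inverse \<beta>" by (simp add: \<beta>_def flip: inverse_theta)
  have dx_\<beta>: "dx \<beta> = - (X + \<beta> * R)"
    using dx_B[of m "Suc m" m, unfolded diff_Suc_1] by (simp add: \<beta>_def X_def R_def)
  have "dx (\<theta> (Suc m)) * inverse (\<theta> (Suc m)) = - (inverse \<beta> * dx \<beta> * inverse \<beta>) * \<beta>"
    using dx.inverse[OF \<open>\<beta> \<noteq> 0\<close>] by (simp add: \<theta>)
  also have "\<dots> = - (inverse \<beta> * dx \<beta>)"
    using \<open>\<beta> \<noteq> 0\<close> by (simp add: mult.assoc)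
  also have "\<dots> = inverse \<beta> * X + inverse \<beta> * \<beta> * R"
    by (simp add: dx_\<beta> algebra_simps)
  also have "\<dots> = inverse \<beta> * X + R"
    using \<open>\<beta> \<noteq> 0\<close> by simp
  finally show ?thesis by (simp add: \<theta> X_def R_def)
qed

lemma dy_sum_B:
  "dy (\<Sum>l<Suc m. u (Suc m) l * B (Suc m) l m) = \<theta> (Suc (Suc m)) * inverse (\<theta> (Suc m))"
proof -
  define N where "N = Suc m"
  define \<beta> where "\<beta> = B N m m"
  define G where "G l = (\<Sum>k<N. B N l k * u k N)" for l
  have dy_B_col: "dy (B N l m) = - ((if l = 0 then 0 else B N (l - 1) m) + G l * \<beta>)" if "l < N" for l
    using dy_B[OF that, of m] by (simp add: N_def G_def \<beta>_def)
  have "dy (\<Sum>l<N. u N l * B N l m)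
      = (\<Sum>l<N. u N (Suc l) * B N l m)
        - (\<Sum>l<N. u N l * (if l = 0 then 0 else B N (l - 1) m))
        - (\<Sum>l<N. u N l * G l) * \<beta>"
    by (simp add: dy.sum dy.mult dy_B_col algebra_simps sum.distrib sum_subtractf sum_distrib_right)
  also have "(\<Sum>l<N. u N l * (if l = 0 then 0 else B N (l - 1) m)) = (\<Sum>l<m. u N (Suc l) * B N l m)"
    unfolding N_def sum.lessThan_Suc_shift by simp
  also have "(\<Sum>l<N. u N (Suc l) * B N l m) = (\<Sum>l<m. u N (Suc l) * B N l m) + u N N * \<beta>"
    by (simp add: N_def \<beta>_def)
  finally have "dy (\<Sum>l<N. u N l * B N l m) = (u N N - (\<Sum>l<N. u N l * G l)) * \<beta>"
    by (simp add: algebra_simps)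
  also have "\<dots> = \<theta> (Suc N) * inverse (\<theta> N)"
    unfolding theta_Suc_eq[of N] inverse_theta[of m, folded N_def] G_def \<beta>_def ..
  finally show ?thesis by (simp add: N_def)
qed

lemma dy_theta_B:
  "dy (\<theta> (Suc m) * (if m = 0 then 0 else B (Suc m) m (m - 1))) = - (\<theta> (Suc m) * theta_inv dx dy \<phi> m)"
proof (cases m)
  case 0
  then show ?thesis by (simp add: theta_inv_def)
next
  case (Suc k)
  define N where "N = Suc m"
  define \<beta> where "\<beta> = B N m m"
  define X where "X = B N m k"
  define G where "G = (\<Sum>j<N. B N m j * u j N)"
  have "\<beta> \<noteq> 0" unfolding \<beta>_def N_def by (rule B_last_nonzero)
  have \<theta>: "\<theta> N = inverse \<beta>" by (simp add: \<beta>_def N_def flip: inverse_theta)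
  have dy_\<beta>: "dy \<beta> = - (B N k m + G * \<beta>)"
    using dy_B[of m N m] by (simp add: Suc N_def \<beta>_def G_def)
  have dy_X: "dy X = - (B N k k + G * X)"
    using dy_B[of m N k] by (simp add: Suc N_def X_def G_def)
  have "theta_inv dx dy \<phi> m = B m k k"
    by (simp add: theta_inv_def Suc inverse_theta)
  also have "\<dots> = B N k k - B N k m * \<theta> N * X"
    using B_mat_delete[of k k k] unfolding Suc[symmetric] N_def[symmetric] X_def by simp
  finally have theta_inv: "theta_inv dx dy \<phi> m = B N k k - B N k m * inverse \<beta> * X"
    by (simp add: \<theta>)
  have "dy (\<theta> N * X) = - (inverse \<beta> * dy \<beta> * inverse \<beta>) * X + inverse \<beta> * dy X"
    using dy.inverse[OF \<open>\<beta> \<noteq> 0\<close>] by (simp add: \<theta> dy.mult)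
  also have "\<dots> = - (inverse \<beta> * (B N k k - B N k m * inverse \<beta> * X))"
    using \<open>\<beta> \<noteq> 0\<close> by (simp add: dy_\<beta> dy_X algebra_simps flip: mult.assoc[of "inverse \<beta>" \<beta>])
  also have "\<dots> = - (\<theta> N * theta_inv dx dy \<phi> m)"
    by (simp add: \<theta> theta_inv)
  finally show ?thesis
    by (simp add: Suc N_def X_def)
qed

lemma dy_log_dx_theta:
  "dy (dx (\<theta> (Suc m)) * inverse (\<theta> (Suc m)))
     = \<theta> (Suc (Suc m)) * inverse (\<theta> (Suc m)) - \<theta> (Suc m) * theta_inv dx dy \<phi> m"
  unfolding log_dx_theta dy.add dy_theta_B dy_sum_B by (simp add: algebra_simps)

end

theorem proposition3p12:
  fixes K :: "'a::{division_ring, ring_char_0} set"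
    and dx dy :: "'a \<Rightarrow> 'a" and \<phi> :: 'a and n :: nat
  assumes "central_subfield K"
    and "is_derivation K dx" and "is_derivation K dy"
    and "\<And>a. dx (dy a) = dy (dx a)"
    and "\<And>m. m \<ge> 1 \<Longrightarrow> quasidet_defined (Theta dx dy \<phi> m) (m - 1) (m - 1)"
    and "\<And>m. m \<ge> 1 \<Longrightarrow> theta dx dy \<phi> m \<noteq> 0"
    and "n \<ge> 1"
  shows "dy (dx (theta dx dy \<phi> n) * inverse (theta dx dy \<phi> n)) =
           theta dx dy \<phi> (n + 1) * inverse (theta dx dy \<phi> n)
         - theta dx dy \<phi> n * theta_inv dx dy \<phi> (n - 1)"
proof -
  have "invertible_mat (Theta dx dy \<phi> m)" for m
    using assms(5)[of "Suc m"] by (simp add: quasidet_defined_def mat_delete_Theta)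
  moreover have "derivation dx" "derivation dy"
    using assms(2,3) unfolding is_derivation_def derivation_def by simp_all
  ultimately interpret Theta_matrices dx dy \<phi>
    using assms(4) by (simp add: Theta_matrices_def Theta_matrices_axioms_def)
  obtain m where "n = Suc m"
    using \<open>n \<ge> 1\<close> by (cases n) auto
  then show ?thesis
    using dy_log_dx_theta[of m] by simp
qed

end
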